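(* Let $\mathcal{G}$ be a 2-player finite game, let $y(t)$ solve $\dot y_k=v_k(Q(y))$, $k=1,2$, and let $x(t)=Q(y(t))$. If the score differences $y_{k\alpha}(t)-y_{k\beta}(t)$ remain bounded for all $t\ge0$, all $\alpha,\beta\in\mathcal{A}_k$ and $k=1,2$, then the time average $\bar x(t)=t^{-1}\int_0^tx(s)\,ds$ converges to the set of Nash equilibria of $\mathcal{G}$.
   Context: Setting: finite game with players $\mathcal{N}=\{1,2\}$, action sets $\mathcal{A}_k$, mixed strategies $\mathcal{X}_k=\Delta(\mathcal{A}_k)$, bilinear expected payoffs $u_k$, payoff vectors $v_k(x)=(u_k(\alpha;x_{-k}))_{\alpha\in\mathcal{A}_k}$. Each player has a penalty function $h_k$ on $\mathcal{X}_k$ (continuous, $C^\infty$ on relative interiors of faces, strongly convex: $h(tx_1+(1-t)x_2)\le th(x_1)+(1-t)h(x_2)-\tfrac12Kt(1-t)\|x_1-x_2\|^2$, $K>0$), with choice map $Q_k(y_k)=\arg\max_{x_k\in\mathcal{X}_k}\{\langle y_k,x_k\rangle-h_k(x_k)\}$; $Q=(Q_1,Q_2)$. Nash equilibrium: $u_k(x^* )\ge u_k(x_k;x^*_{-k})$ for all $x_k$, $k$. *)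

theory Defs
  imports "HOL-Analysis.Analysis"
begin

definition mixed_strats :: "(real ^ 'a::finite) set" where
  "mixed_strats = {x. (\<forall>i. 0 \<le> x $ i) \<and> (\<Sum>i\<in>UNIV. x $ i) = 1}"

definition face_relint :: "'a set \<Rightarrow> (real ^ 'a::finite) set" where
  "face_relint S = {x \<in> mixed_strats. \<forall>i. (i \<in> S \<longleftrightarrow> 0 < x $ i)}"

definition face_dirs :: "'a set \<Rightarrow> (real ^ 'a::finite) set" where
  "face_dirs S = {d. (\<forall>i. i \<notin> S \<longrightarrow> d $ i = 0) \<and> (\<Sum>i\<in>UNIV. d $ i) = 0}"

fun iter_dd :: "('v::real_vector \<Rightarrow> real) \<Rightarrow> 'v list \<Rightarrow> 'v \<Rightarrow> real" where
  "iter_dd f [] = f"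
| "iter_dd f (d # ds) = (\<lambda>x. deriv (\<lambda>t. iter_dd f ds (x + t *\<^sub>R d)) 0)"

text \<open>C-infinity on a relatively open set M of an affine subspace with direction space V:
  all iterated directional derivatives along V exist and are continuous on M.\<close>
definition smooth_rel :: "('v::real_normed_vector \<Rightarrow> real) \<Rightarrow> 'v set \<Rightarrow> 'v set \<Rightarrow> bool" where
  "smooth_rel f M V \<longleftrightarrow>
     (\<forall>ds. set ds \<subseteq> V \<longrightarrow>
        continuous_on M (iter_dd f ds) \<and>
        (\<forall>d\<in>V. \<forall>x\<in>M. (\<lambda>t. iter_dd f ds (x + t *\<^sub>R d)) differentiable (at 0)))"

definition penalty :: "(real ^ 'a::finite \<Rightarrow> real) \<Rightarrow> bool" where
  "penalty h \<longleftrightarrow>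
     continuous_on mixed_strats h \<and>
     (\<forall>S. S \<noteq> {} \<longrightarrow> smooth_rel h (face_relint S) (face_dirs S)) \<and>
     (\<exists>K>0. \<forall>x1\<in>mixed_strats. \<forall>x2\<in>mixed_strats. \<forall>t\<in>{0..1}.
        h (t *\<^sub>R x1 + (1 - t) *\<^sub>R x2)
          \<le> t * h x1 + (1 - t) * h x2 - 1/2 * K * t * (1 - t) * (norm (x1 - x2))\<^sup>2)"

definition choice :: "(real ^ 'a::finite \<Rightarrow> real) \<Rightarrow> real ^ 'a \<Rightarrow> real ^ 'a" where
  "choice h y = (THE x. x \<in> mixed_strats \<and> (\<forall>z\<in>mixed_strats. y \<bullet> z - h z \<le> y \<bullet> x - h x))"

definition exp_payoff :: "('a::finite \<Rightarrow> 'b::finite \<Rightarrow> real) \<Rightarrow> real ^ 'a \<Rightarrow> real ^ 'b \<Rightarrow> real" where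
  "exp_payoff u x1 x2 = (\<Sum>a\<in>UNIV. \<Sum>b\<in>UNIV. u a b * x1 $ a * x2 $ b)"

definition payvec1 :: "('a::finite \<Rightarrow> 'b::finite \<Rightarrow> real) \<Rightarrow> real ^ 'b \<Rightarrow> real ^ 'a" where
  "payvec1 u x2 = (\<chi> a. \<Sum>b\<in>UNIV. u a b * x2 $ b)"

definition payvec2 :: "('a::finite \<Rightarrow> 'b::finite \<Rightarrow> real) \<Rightarrow> real ^ 'a \<Rightarrow> real ^ 'b" where
  "payvec2 u x1 = (\<chi> b. \<Sum>a\<in>UNIV. u a b * x1 $ a)"

definition nash_equilibria ::
  "('a::finite \<Rightarrow> 'b::finite \<Rightarrow> real) \<Rightarrow> ('a \<Rightarrow> 'b \<Rightarrow> real) \<Rightarrow> ((real ^ 'a) \<times> (real ^ 'b)) set" where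
  "nash_equilibria u1 u2 = {(x1, x2). x1 \<in> mixed_strats \<and> x2 \<in> mixed_strats \<and>
      (\<forall>z\<in>mixed_strats. exp_payoff u1 z x2 \<le> exp_payoff u1 x1 x2) \<and>
      (\<forall>w\<in>mixed_strats. exp_payoff u2 x1 w \<le> exp_payoff u2 x1 x2)}"

end

theory Submission
  imports Defs
begin

text \<open>Integrating the score dynamics over [0, t] shows that the payoff vector of player k against
  the time-averaged strategy of the opponent equals (y_k(t) - y_k(0)) / t.  If the score
  differences stay bounded, all pure strategies of each player therefore earn asymptotically the
  same payoff against the opponent's average.  On the compact space of strategy profiles, the
  continuous function measuring these payoff differences vanishes only where every player is
  indifferent among his pure strategies, and such profiles are Nash equilibria; hence the time
  averages approach the equilibrium set.  Strong convexity of the penalties is what makes the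
  choice maps single-valued and Lipschitz, so that the averages are defined at all.\<close>

lemma compact_mixed_strats: "compact (mixed_strats :: (real^'a::finite) set)"
proof -
  have "closed (mixed_strats :: (real^'a) set)"
    unfolding mixed_strats_def
    by (intro closed_Collect_conj closed_Collect_all closed_Collect_le closed_Collect_eq
        continuous_intros)
  moreover have "norm x \<le> 1" if "x \<in> mixed_strats" for x :: "real^'a"
  proof -
    have "norm x \<le> (\<Sum>i\<in>UNIV. \<bar>x $ i\<bar>)" by (rule norm_le_l1_cart)
    also have "\<dots> = (\<Sum>i\<in>UNIV. x $ i)"
      using that by (auto simp: mixed_strats_def intro!: sum.cong)
    finally show ?thesis using that by (simp add: mixed_strats_def)
  qed
  then have "bounded (mixed_strats :: (real^'a) set)" unfolding bounded_iff by blast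
  ultimately show ?thesis by (simp add: compact_eq_bounded_closed)
qed

lemma convex_mixed_strats: "convex (mixed_strats :: (real^'a::finite) set)"
  unfolding convex_def mixed_strats_def
  by (auto simp: sum.distrib sum_distrib_left[symmetric])

lemma mixed_strats_nonempty: "(mixed_strats :: (real^'a::finite) set) \<noteq> {}"
proof -
  have "(\<chi> i. 1 / real CARD('a)) \<in> (mixed_strats :: (real^'a) set)"
    by (simp add: mixed_strats_def)
  then show ?thesis by blast
qed

lemma inner_mixed_strat_const:
  fixes v :: "real^'a::finite"
  assumes "\<forall>a a'. v $ a = v $ a'" and "w \<in> mixed_strats"
  shows "w \<bullet> v = v $ a"
proof -
  have "w \<bullet> v = (\<Sum>i\<in>UNIV. w $ i * v $ a)"
    unfolding inner_vec_def using assms(1) by (metis inner_real_def)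
  also have "\<dots> = v $ a"
    using assms(2) by (simp add: mixed_strats_def sum_distrib_right[symmetric])
  finally show ?thesis .
qed


definition strongly_convex_on :: "'v::real_normed_vector set \<Rightarrow> real \<Rightarrow> ('v \<Rightarrow> real) \<Rightarrow> bool" where
  "strongly_convex_on S K h \<longleftrightarrow>
     (\<forall>x1\<in>S. \<forall>x2\<in>S. \<forall>t\<in>{0..1}.
        h (t *\<^sub>R x1 + (1 - t) *\<^sub>R x2)
          \<le> t * h x1 + (1 - t) * h x2 - 1/2 * K * t * (1 - t) * (norm (x1 - x2))\<^sup>2)"

lemma penalty_strongly_convex:
  assumes "penalty h"
  obtains K where "K > 0" "strongly_convex_on mixed_strats K h"
  using assms unfolding penalty_def strongly_convex_on_def by blast

lemma strongly_convex_argmax_lipschitz: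
  fixes h :: "'v::real_inner \<Rightarrow> real"
  assumes S: "convex S" and K: "K > 0" and sc: "strongly_convex_on S K h"
    and x: "x \<in> S" "\<forall>z\<in>S. y \<bullet> z - h z \<le> y \<bullet> x - h x"
    and x': "x' \<in> S" "\<forall>z\<in>S. y' \<bullet> z - h z \<le> y' \<bullet> x' - h x'"
  shows "norm (x - x') \<le> 2 / K * norm (y - y')"
proof -
  \<comment> \<open>Test both optimality conditions at the midpoint, where strong convexity gains K/8 |x - x'|^2.\<close>
  define m where "m = (1/2) *\<^sub>R x' + (1 - 1/2) *\<^sub>R x"
  have "m \<in> S" unfolding m_def by (rule convexD[OF S x'(1) x(1)]) simp_all
  then have "y \<bullet> m - h m \<le> y \<bullet> x - h x" "y' \<bullet> m - h m \<le> y' \<bullet> x' - h x'"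
    using x(2) x'(2) by auto
  moreover have "h m \<le> 1/2 * h x' + 1/2 * h x - K/8 * (norm (x - x'))\<^sup>2"
    using sc[unfolded strongly_convex_on_def, rule_format, OF x'(1) x(1), of "1/2"]
    by (simp add: m_def norm_minus_commute)
  ultimately have "K/4 * (norm (x - x'))\<^sup>2 \<le> 1/2 * ((y - y') \<bullet> (x - x'))"
    by (simp add: m_def inner_add_right inner_diff_left inner_diff_right algebra_simps)
  also have "\<dots> \<le> 1/2 * (norm (y - y') * norm (x - x'))"
    using norm_cauchy_schwarz[of "y - y'" "x - x'"] by simp
  finally have "K/2 * norm (x - x') * norm (x - x') \<le> norm (y - y') * norm (x - x')"
    by (simp add: power2_eq_square)
  then have "norm (x - x') = 0 \<or> K/2 * norm (x - x') \<le> norm (y - y')"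
    by (metis mult_right_le_imp_le norm_ge_zero order_less_le)
  then show ?thesis using K by (auto simp: field_simps)
qed

lemma choice_maximizes:
  assumes h: "penalty h"
  shows "choice h y \<in> mixed_strats"
    and "\<forall>z\<in>mixed_strats. y \<bullet> z - h z \<le> y \<bullet> choice h y - h (choice h y)"
proof -
  let ?max = "\<lambda>x. x \<in> mixed_strats \<and> (\<forall>z\<in>mixed_strats. y \<bullet> z - h z \<le> y \<bullet> x - h x)"
  obtain K where K: "K > 0" "strongly_convex_on mixed_strats K h"
    using penalty_strongly_convex[OF h] .
  have "continuous_on mixed_strats (\<lambda>z. y \<bullet> z - h z)"
    using h by (auto simp: penalty_def intro!: continuous_intros)
  then obtain x where x: "?max x"
    using continuous_attains_sup[OF compact_mixed_strats mixed_strats_nonempty] by blast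
  have unique: "x' = x" if "?max x'" for x'
  proof -
    have "norm (x' - x) \<le> 2 / K * norm (y - y)"
      using that x by (intro strongly_convex_argmax_lipschitz[OF convex_mixed_strats K]) auto
    then show ?thesis by simp
  qed
  have "?max (THE x. ?max x)" using x unique by (rule theI)
  then show "choice h y \<in> mixed_strats"
    and "\<forall>z\<in>mixed_strats. y \<bullet> z - h z \<le> y \<bullet> choice h y - h (choice h y)"
    unfolding choice_def by simp_all
qed

lemma continuous_on_choice:
  assumes h: "penalty h"
  shows "continuous_on S (choice h)"
proof -
  obtain K where K: "K > 0" "strongly_convex_on mixed_strats K h"
    using penalty_strongly_convex[OF h] .
  have "(2 / K)-lipschitz_on S (choice h)"
    using K strongly_convex_argmax_lipschitz[OF convex_mixed_strats K choice_maximizes[OF h]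
        choice_maximizes[OF h]]
    by (intro lipschitz_onI) (auto simp: dist_norm)
  then show ?thesis by (rule lipschitz_on_continuous_on)
qed


lemma bounded_linear_payvec1: "bounded_linear (payvec1 u)"
proof -
  have "linear (payvec1 u)"
    by (rule linearI)
      (simp_all add: payvec1_def vec_eq_iff sum.distrib sum_distrib_left algebra_simps)
  then show ?thesis by (simp add: linear_conv_bounded_linear)
qed

lemma bounded_linear_payvec2: "bounded_linear (payvec2 u)"
proof -
  have "linear (payvec2 u)"
    by (rule linearI)
      (simp_all add: payvec2_def vec_eq_iff sum.distrib sum_distrib_left algebra_simps)
  then show ?thesis by (simp add: linear_conv_bounded_linear)
qed

lemma exp_payoff_eq_inner_payvec1: "exp_payoff u x1 x2 = x1 \<bullet> payvec1 u x2"
  by (simp add: exp_payoff_def payvec1_def inner_vec_def sum_distrib_left algebra_simps)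

lemma exp_payoff_eq_inner_payvec2: "exp_payoff u x1 x2 = x2 \<bullet> payvec2 u x1"
  unfolding exp_payoff_def payvec2_def inner_vec_def
  by (subst sum.swap) (simp add: sum_distrib_left algebra_simps)

definition spread :: "real^'a::finite \<Rightarrow> real" where
  "spread v = (\<Sum>a\<in>UNIV. \<Sum>a'\<in>UNIV. \<bar>v $ a - v $ a'\<bar>)"

lemma spread_nonneg: "0 \<le> spread v"
  unfolding spread_def by (intro sum_nonneg) auto

lemma spread_eq_0_iff: "spread v = 0 \<longleftrightarrow> (\<forall>a a'. v $ a = v $ a')"
  unfolding spread_def by (simp add: sum_nonneg_eq_0_iff sum_nonneg)

lemma spread_le:
  fixes v :: "real^'a::finite"
  assumes "\<And>a a'. \<bar>v $ a - v $ a'\<bar> \<le> B"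
  shows "spread v \<le> real CARD('a) ^ 2 * B"
proof -
  have "spread v \<le> (\<Sum>a\<in>(UNIV::'a set). \<Sum>a'\<in>(UNIV::'a set). B)"
    unfolding spread_def by (intro sum_mono assms)
  then show ?thesis by (simp add: power2_eq_square)
qed

lemma continuous_on_spread [continuous_intros]:
  "continuous_on S f \<Longrightarrow> continuous_on S (\<lambda>x. spread (f x))"
  unfolding spread_def by (intro continuous_intros)

lemma indifferent_in_nash_equilibria:
  assumes "x1 \<in> mixed_strats" "x2 \<in> mixed_strats"
    and "spread (payvec1 u1 x2) = 0" "spread (payvec2 u2 x1) = 0"
  shows "(x1, x2) \<in> nash_equilibria u1 u2"
  using assms
  by (simp add: nash_equilibria_def exp_payoff_eq_inner_payvec1[of u1]
      exp_payoff_eq_inner_payvec2[of u2] spread_eq_0_iff inner_mixed_strat_const[of _ _ undefined])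

definition nash_gap ::
  "('a::finite \<Rightarrow> 'b::finite \<Rightarrow> real) \<Rightarrow> ('a \<Rightarrow> 'b \<Rightarrow> real) \<Rightarrow> (real^'a) \<times> (real^'b) \<Rightarrow> real" where
  "nash_gap u1 u2 z = spread (payvec1 u1 (snd z)) + spread (payvec2 u2 (fst z))"

lemma continuous_on_nash_gap: "continuous_on S (nash_gap u1 u2)"
  unfolding nash_gap_def
  by (intro continuous_intros bounded_linear.continuous_on[OF bounded_linear_payvec1]
      bounded_linear.continuous_on[OF bounded_linear_payvec2])

lemma nash_gap_eq_0_imp_nash:
  assumes "z \<in> mixed_strats \<times> mixed_strats" "nash_gap u1 u2 z = 0"
  shows "z \<in> nash_equilibria u1 u2"
  using assms indifferent_in_nash_equilibria[of "fst z" "snd z" u1 u2]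
  by (simp add: nash_gap_def add_nonneg_eq_0_iff spread_nonneg mem_Times_iff)


lemma integral_Pair:
  assumes "(\<lambda>s. (f s, g s)) integrable_on S"
  shows "integral S (\<lambda>s. (f s, g s)) = (integral S f, integral S g)"
  using integral_linear[OF assms bounded_linear_fst] integral_linear[OF assms bounded_linear_snd]
  by (simp add: o_def prod_eq_iff)

lemma linear_image_integral_eq_increment:
  fixes y :: "real \<Rightarrow> 'a::banach" and x :: "real \<Rightarrow> 'b::banach"
  assumes ode: "\<forall>t\<ge>0. (y has_vector_derivative P (x t)) (at t within {0..})"
    and P: "bounded_linear P" and x: "continuous_on {0..} x" and t: "t \<ge> 0"
  shows "P (integral {0..t} x) = y t - y 0"
proof -
  have "((\<lambda>s. P (x s)) has_integral (y t - y 0)) {0..t}"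
    using t by (intro fundamental_theorem_of_calculus)
      (auto intro: has_vector_derivative_within_subset[OF ode[rule_format]])
  moreover have "x integrable_on {0..t}"
    by (rule integrable_continuous_interval) (rule continuous_on_subset[OF x], auto)
  ultimately show ?thesis using integral_linear[OF _ P, of x "{0..t}"]
    by (simp add: o_def integral_unique)
qed

lemma continuous_on_choice_path:
  assumes h: "penalty h"
    and y: "\<forall>t\<ge>0. (y has_vector_derivative y' t) (at t within {0..})"
  shows "continuous_on {0..} (\<lambda>s. choice h (y s))"
proof -
  have "continuous_on {0..} y"
    using y by (auto intro!: continuous_on_eq_continuous_within[THEN iffD2]
        has_vector_derivative_continuous)
  then show ?thesis by (rule continuous_on_compose2[OF continuous_on_choice[OF h]]) auto
qed

lemma time_average_in_mixed_strats:
  fixes x :: "real \<Rightarrow> real^'a::finite"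
  assumes x: "continuous_on {0..} x" and mem: "\<And>s. s \<ge> 0 \<Longrightarrow> x s \<in> mixed_strats"
    and t: "t > 0"
  shows "(1/t) *\<^sub>R integral {0..t} x \<in> mixed_strats"
proof -
  have int: "x integrable_on {0..t}"
    by (rule integrable_continuous_interval) (rule continuous_on_subset[OF x], auto)
  have comp: "(\<lambda>s. x s $ i) integrable_on {0..t}" for i
    using integrable_linear[OF int bounded_linear_vec_nth] by (simp add: o_def)
  have "0 \<le> integral {0..t} (\<lambda>s. x s $ i)" for i
    using mem by (auto simp: mixed_strats_def intro!: integral_nonneg comp)
  then have nonneg: "0 \<le> integral {0..t} x $ i" for i
    using int by simp
  have "(\<Sum>i\<in>UNIV. integral {0..t} x $ i) = integral {0..t} (\<lambda>s. \<Sum>i\<in>UNIV. x s $ i)"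
    using int comp by (simp add: integral_sum)
  also have "\<dots> = integral {0..t} (\<lambda>s. 1)"
    by (rule integral_cong) (use mem in \<open>auto simp: mixed_strats_def\<close>)
  also have "\<dots> = t" using t by simp
  finally have sum: "(\<Sum>i\<in>UNIV. integral {0..t} x $ i) = t" .
  have "(\<Sum>i\<in>UNIV. ((1/t) *\<^sub>R integral {0..t} x) $ i) = 1"
    using sum t by (simp add: sum_divide_distrib[symmetric])
  then show ?thesis
    using nonneg t by (simp add: mixed_strats_def)
qed

lemma spread_average_payoff_tendsto_0:
  fixes y :: "real \<Rightarrow> real^'a::finite" and x :: "real \<Rightarrow> real^'b::finite"
  assumes ode: "\<forall>t\<ge>0. (y has_vector_derivative P (x t)) (at t within {0..})"
    and P: "bounded_linear P" and x: "continuous_on {0..} x"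
    and bnd: "\<forall>t\<ge>0. \<forall>a a'. \<bar>y t $ a - y t $ a'\<bar> \<le> M"
  shows "((\<lambda>t. spread (P ((1/t) *\<^sub>R integral {0..t} x))) \<longlongrightarrow> 0) at_top"
proof (rule tendsto_sandwich)
  show "\<forall>\<^sub>F t in at_top. 0 \<le> spread (P ((1/t) *\<^sub>R integral {0..t} x))"
    by (simp add: spread_nonneg)
  have bound: "spread (P ((1/t) *\<^sub>R integral {0..t} x)) \<le> real CARD('a) ^ 2 * (2 * M) / t"
    if t: "t > 0" for t
  proof -
    have avg: "P ((1/t) *\<^sub>R integral {0..t} x) = (1/t) *\<^sub>R (y t - y 0)"
      using linear_image_integral_eq_increment[OF ode P x] t
      by (simp add: linear_scale[OF bounded_linear.linear[OF P]])
    have "\<bar>P ((1/t) *\<^sub>R integral {0..t} x) $ a - P ((1/t) *\<^sub>R integral {0..t} x) $ a'\<bar>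
        \<le> 2 * M / t" for a a'
    proof -
      have "\<bar>(y t $ a - y t $ a') - (y 0 $ a - y 0 $ a')\<bar> \<le> 2 * M"
        using bnd[rule_format, of t a a'] bnd[rule_format, of 0 a a'] t by simp
      moreover have "P ((1/t) *\<^sub>R integral {0..t} x) $ a - P ((1/t) *\<^sub>R integral {0..t} x) $ a'
          = ((y t $ a - y t $ a') - (y 0 $ a - y 0 $ a')) / t"
        unfolding avg by (simp add: diff_divide_distrib)
      ultimately show ?thesis
        using t by (simp add: abs_divide divide_right_mono)
    qed
    from spread_le[OF this] show ?thesis by simp
  qed
  show "\<forall>\<^sub>F t in at_top. spread (P ((1/t) *\<^sub>R integral {0..t} x))
      \<le> real CARD('a) ^ 2 * (2 * M) / t"
    using eventually_gt_at_top[of 0] by (rule eventually_mono) (rule bound)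
  show "((\<lambda>t. real CARD('a) ^ 2 * (2 * M) / t) \<longlongrightarrow> 0) at_top"
    by (rule tendsto_divide_0[OF tendsto_const filterlim_at_top_imp_at_infinity[OF filterlim_ident]])
qed (rule tendsto_const)


text \<open>On a compact set, a continuous function is bounded away from zero outside every
  neighbourhood of its zero set.\<close>

lemma infdist_tendsto_0_if_zero_set:
  fixes g :: "'c::metric_space \<Rightarrow> real"
  assumes X: "compact X" and g: "continuous_on X g" and zeros: "\<And>z. z \<in> X \<Longrightarrow> g z = 0 \<Longrightarrow> z \<in> N"
    and mem: "\<forall>\<^sub>F t in F. A t \<in> X" and lim: "((\<lambda>t. g (A t)) \<longlongrightarrow> 0) F"
  shows "((\<lambda>t. infdist (A t) N) \<longlongrightarrow> 0) F"
proof (rule tendstoI)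
  fix e :: real assume e: "e > 0"
  define C where "C = X \<inter> {z. e \<le> infdist z N}"
  have "compact C" unfolding C_def
    by (intro compact_Int_closed X closed_Collect_le continuous_intros continuous_on_infdist)
  have "\<exists>m>0. \<forall>z\<in>C. m \<le> \<bar>g z\<bar>"
  proof (cases "C = {}")
    case False
    have "continuous_on C (\<lambda>z. \<bar>g z\<bar>)"
      using g by (auto simp: C_def intro!: continuous_intros elim: continuous_on_subset)
    then obtain z0 where z0: "z0 \<in> C" and min: "\<forall>z\<in>C. \<bar>g z0\<bar> \<le> \<bar>g z\<bar>"
      using continuous_attains_inf[OF \<open>compact C\<close> False] by blast
    have "g z0 \<noteq> 0"
      using zeros[of z0] z0 e infdist_zero[of z0 N] by (auto simp: C_def)
    with min show ?thesis by (intro exI[of _ "\<bar>g z0\<bar>"]) auto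
  qed (simp add: exI[of _ 1])
  then obtain m where m: "m > 0" "\<forall>z\<in>C. m \<le> \<bar>g z\<bar>" by blast
  from mem tendstoD[OF lim m(1)] show "\<forall>\<^sub>F t in F. dist (infdist (A t) N) 0 < e"
  proof eventually_elim
    case (elim t)
    then have "A t \<notin> C" using m(2) by force
    with elim show ?case by (auto simp: C_def infdist_nonneg)
  qed
qed


theorem theorem6p1:
  fixes u1 u2 :: "'a::finite \<Rightarrow> 'b::finite \<Rightarrow> real"
    and h1 :: "real ^ 'a \<Rightarrow> real" and h2 :: "real ^ 'b \<Rightarrow> real"
    and y1 :: "real \<Rightarrow> real ^ 'a" and y2 :: "real \<Rightarrow> real ^ 'b"
  assumes h1: "penalty h1" and h2: "penalty h2"
    and ode1: "\<forall>t\<ge>0. (y1 has_vector_derivative payvec1 u1 (choice h2 (y2 t))) (at t within {0..})"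
    and ode2: "\<forall>t\<ge>0. (y2 has_vector_derivative payvec2 u2 (choice h1 (y1 t))) (at t within {0..})"
    and bnd1: "\<exists>M. \<forall>t\<ge>0. \<forall>a a'. \<bar>y1 t $ a - y1 t $ a'\<bar> \<le> M"
    and bnd2: "\<exists>M. \<forall>t\<ge>0. \<forall>b b'. \<bar>y2 t $ b - y2 t $ b'\<bar> \<le> M"
  shows "((\<lambda>t. infdist ((1 / t) *\<^sub>R integral {0..t} (\<lambda>s. (choice h1 (y1 s), choice h2 (y2 s))))
                  (nash_equilibria u1 u2)) \<longlongrightarrow> 0) at_top"
proof -
  obtain M1 M2 where M1: "\<forall>t\<ge>0. \<forall>a a'. \<bar>y1 t $ a - y1 t $ a'\<bar> \<le> M1"
    and M2: "\<forall>t\<ge>0. \<forall>b b'. \<bar>y2 t $ b - y2 t $ b'\<bar> \<le> M2" using bnd1 bnd2 by blast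
  define x1 where "x1 s = choice h1 (y1 s)" for s
  define x2 where "x2 s = choice h2 (y2 s)" for s
  define avg where "avg t = ((1/t) *\<^sub>R integral {0..t} x1, (1/t) *\<^sub>R integral {0..t} x2)" for t
  have x1: "continuous_on {0..} x1"
    unfolding x1_def by (rule continuous_on_choice_path[OF h1 ode1])
  have x2: "continuous_on {0..} x2"
    unfolding x2_def by (rule continuous_on_choice_path[OF h2 ode2])
  have "(\<lambda>s. (x1 s, x2 s)) integrable_on {0..t}" for t
    by (intro integrable_continuous_interval continuous_on_Pair
        continuous_on_subset[OF x1] continuous_on_subset[OF x2]) auto
  then have avg: "(1/t) *\<^sub>R integral {0..t} (\<lambda>s. (x1 s, x2 s)) = avg t" for t
    by (simp add: avg_def integral_Pair)
  have mem: "avg t \<in> mixed_strats \<times> mixed_strats" if "t > 0" for t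
    using time_average_in_mixed_strats[OF x1 _ that] time_average_in_mixed_strats[OF x2 _ that]
    by (simp add: avg_def x1_def x2_def choice_maximizes h1 h2)
  have eventually_mem: "\<forall>\<^sub>F t in at_top. avg t \<in> mixed_strats \<times> mixed_strats"
    using eventually_gt_at_top[of 0] by (rule eventually_mono) (rule mem)
  have gap: "((\<lambda>t. nash_gap u1 u2 (avg t)) \<longlongrightarrow> 0) at_top"
    using tendsto_add_zero[OF
        spread_average_payoff_tendsto_0[OF ode1[folded x2_def] bounded_linear_payvec1 x2 M1]
        spread_average_payoff_tendsto_0[OF ode2[folded x1_def] bounded_linear_payvec2 x1 M2]]
    by (simp add: avg_def nash_gap_def)
  have "((\<lambda>t. infdist (avg t) (nash_equilibria u1 u2)) \<longlongrightarrow> 0) at_top"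
    by (rule infdist_tendsto_0_if_zero_set[OF compact_Times[OF compact_mixed_strats
          compact_mixed_strats] continuous_on_nash_gap _ eventually_mem gap])
      (rule nash_gap_eq_0_imp_nash)
  then show ?thesis unfolding avg[symmetric] x1_def x2_def .
qed

end
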